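(* Let $(X_i)_{i\in\mathbb{Z}}$ be i.i.d. nonnegative with $\mathbb{E}X_i=1$ and $\mathbb{E}X_i^\gamma<\infty$ for some $\gamma\ge2$. Then for every $t<1$ the stationary sequence $(\min\{T_i,t\})_{i\in\mathbb{Z}}$ is strongly mixing, and its strong mixing coefficients satisfy $\alpha(k)=o(k^{2-\gamma})$ as $k\to\infty$.
   Context: For a stationary sequence $(\xi_i)_{i\in\mathbb{Z}}$, $\alpha(k):=\sup_{A\in\mathcal{F}_{-\infty}^0,B\in\mathcal{F}_k^\infty}|\mathbb{P}(AB)-\mathbb{P}(A)\mathbb{P}(B)|$ with $\mathcal{F}_{-\infty}^0=\sigma(\xi_0,\xi_{-1},\dots)$, $\mathcal{F}_k^\infty=\sigma(\xi_k,\xi_{k+1},\dots)$; the sequence is strongly mixing if $\alpha(k)\to0$. For $p,q\ge1$, $j\in\mathbb{Z}$, $s\ge0$: $F_{p,j,q}(s)=\frac1p\sum_{i=1}^{p-1}(p-i)X_{j+i+1}+\frac1q\sum_{i=1}^{q-1}(q-i)X_{j-i+1}+X_{j+1}-\frac{p+q}{2}s^2$ (empty sums are $0$); $T_j:=\inf_{k,l\ge1}\{s\ge0:F_{k,j,l}(s)=0\}$. *)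

theory Defs
  imports "HOL-Probability.Probability" "HOL-Library.Landau_Symbols"
begin

definition Ffun :: "(int \<Rightarrow> real) \<Rightarrow> nat \<Rightarrow> int \<Rightarrow> nat \<Rightarrow> real \<Rightarrow> real" where
  "Ffun x p j q s =
     (1 / real p) * (\<Sum>i\<in>{1..<p}. real (p - i) * x (j + int i + 1))
   + (1 / real q) * (\<Sum>i\<in>{1..<q}. real (q - i) * x (j - int i + 1))
   + x (j + 1) - (real p + real q) / 2 * s\<^sup>2"

definition Tfun :: "(int \<Rightarrow> real) \<Rightarrow> int \<Rightarrow> real" where
  "Tfun x j = Inf {s. \<exists>k l. k \<ge> 1 \<and> l \<ge> 1 \<and> s \<ge> 0 \<and> Ffun x k j l s = 0}"

definition gen_sets :: "'a measure \<Rightarrow> (int \<Rightarrow> 'a \<Rightarrow> real) \<Rightarrow> int set \<Rightarrow> 'a set set" where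
  "gen_sets M Y I = sigma_sets (space M) {Y i -` B \<inter> space M | i B. i \<in> I \<and> B \<in> sets borel}"

definition mixing_coeff :: "'a measure \<Rightarrow> (int \<Rightarrow> 'a \<Rightarrow> real) \<Rightarrow> int \<Rightarrow> real" where
  "mixing_coeff M Y k =
     (SUP p \<in> gen_sets M Y {..0} \<times> gen_sets M Y {k..}.
        \<bar>measure M (fst p \<inter> snd p) - measure M (fst p) * measure M (snd p)\<bar>)"

end

theory Submission
  imports Defs "HOL-Real_Asymp.Real_Asymp"
begin

(* For a nonnegative path, F_{p,j,q} has the single nonnegative root
   sqrt (2 F_{p,j,q}(0) / (p + q)), and F_{p,j,q}(0) is a weighted sum of the X_n over a window
   of p + q - 1 sites, with weights in [0, 1] of total (p + q) / 2.  Since E X = 1, a Chernoff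
   bound that uses only the second moment shows that such a root lies below a level tau < 1 with
   probability at most exp (-c (p + q)).  Summing these bounds, outside an event of probability
   O(exp (-c m)) every min (T_i, t) with i <= 0 is a function of the X_n with n <= m, and every one
   with i >= 2 m a function of the X_n with n > m.  The two blocks are independent, so
   alpha(2 m) = O(exp (-c m)), which is o(k^(2 - gamma)).  Stationarity holds because
   min (T_(i+1), t) is the same measurable function of the shifted i.i.d. sequence as min (T_i, t)
   is of the sequence itself. *)

section \<open>The roots of \<open>F\<close>\<close>

lemma Ffun_shift: "Ffun x p (j + 1) q s = Ffun (\<lambda>n. x (n + 1)) p j q s"
  unfolding Ffun_def by (simp add: algebra_simps)

lemma Tfun_shift: "Tfun x (j + 1) = Tfun (\<lambda>n. x (n + 1)) j"
  unfolding Tfun_def Ffun_shift ..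

definition Fconst :: "(int \<Rightarrow> real) \<Rightarrow> nat \<Rightarrow> int \<Rightarrow> nat \<Rightarrow> real" where
  "Fconst x p j q = Ffun x p j q 0"

definition Froot :: "(int \<Rightarrow> real) \<Rightarrow> nat \<Rightarrow> int \<Rightarrow> nat \<Rightarrow> real" where
  "Froot x p j q = sqrt (2 * Fconst x p j q / (real p + real q))"

lemma Ffun_eq_Fconst: "Ffun x p j q s = Fconst x p j q - (real p + real q) / 2 * s\<^sup>2"
  unfolding Fconst_def Ffun_def by simp

lemma Fconst_nonneg:
  assumes "\<And>n. 0 \<le> x n"
  shows "0 \<le> Fconst x p j q"
proof -
  have "0 \<le> 1 / real p * (\<Sum>i\<in>{1..<p}. real (p - i) * x (j + int i + 1))"
    "0 \<le> 1 / real q * (\<Sum>i\<in>{1..<q}. real (q - i) * x (j - int i + 1))"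
    using assms by (intro mult_nonneg_nonneg sum_nonneg; simp)+
  then show ?thesis
    unfolding Fconst_def Ffun_def using assms[of "j + 1"] by simp
qed

lemma Froot_nonneg: "(\<And>n. 0 \<le> x n) \<Longrightarrow> 0 \<le> Froot x p j q"
  unfolding Froot_def using Fconst_nonneg by simp

lemma Ffun_root_iff:
  assumes "\<And>n. 0 \<le> x n" and "1 \<le> p" "1 \<le> q"
  shows "0 \<le> s \<and> Ffun x p j q s = 0 \<longleftrightarrow> s = Froot x p j q"
proof -
  define v where "v = 2 * Fconst x p j q / (real p + real q)"
  have "0 < real p + real q" using assms by simp
  then have "Ffun x p j q s = 0 \<longleftrightarrow> s\<^sup>2 = v"
    unfolding Ffun_eq_Fconst v_def by (simp add: field_simps) arith
  moreover have "0 \<le> v"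
    unfolding v_def using Fconst_nonneg[OF assms(1)] \<open>0 < real p + real q\<close> by simp
  ultimately show ?thesis
    unfolding Froot_def v_def[symmetric] by (auto intro: real_sqrt_unique[symmetric])
qed

lemma Tfun_eq_INF_Froot:
  assumes "\<And>n. 0 \<le> x n"
  shows "Tfun x j = (INF (p, q)\<in>{1..} \<times> {1..}. Froot x p j q)"
proof -
  have "{s. \<exists>p q. 1 \<le> p \<and> 1 \<le> q \<and> 0 \<le> s \<and> Ffun x p j q s = 0}
      = (\<lambda>(p, q). Froot x p j q) ` ({1..} \<times> {1..})" (is "?roots = _")
  proof (intro set_eqI iffI)
    fix s assume "s \<in> ?roots"
    then obtain p q where "1 \<le> p" "1 \<le> q" "0 \<le> s \<and> Ffun x p j q s = 0" by blast
    then have "s = Froot x p j q" using Ffun_root_iff[of x p q s j] assms by simp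
    with \<open>1 \<le> p\<close> \<open>1 \<le> q\<close> show "s \<in> (\<lambda>(p, q). Froot x p j q) ` ({1..} \<times> {1..})"
      by (intro image_eqI[where x="(p, q)"]) auto
  next
    fix s assume "s \<in> (\<lambda>(p, q). Froot x p j q) ` ({1..} \<times> {1..})"
    then obtain p q where pq: "1 \<le> p" "1 \<le> q" and "s = Froot x p j q" by auto
    then have "0 \<le> s \<and> Ffun x p j q s = 0"
      using Ffun_root_iff[of x p q s j] assms by simp
    with pq show "s \<in> ?roots" by blast
  qed
  then show ?thesis unfolding Tfun_def by simp
qed

definition Fwindow :: "nat \<Rightarrow> int \<Rightarrow> nat \<Rightarrow> int set" where
  "Fwindow p j q = {j - int q + 2 .. j + int p}"

definition Fweight :: "nat \<Rightarrow> int \<Rightarrow> nat \<Rightarrow> int \<Rightarrow> real" where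
  "Fweight p j q n =
     (if j + 1 \<le> n then (real p - real_of_int (n - j - 1)) / real p
      else (real q - real_of_int (j + 1 - n)) / real q)"

lemma Fconst_eq_sum_Fweight:
  assumes "1 \<le> p" "1 \<le> q"
  shows "Fconst x p j q = (\<Sum>n\<in>Fwindow p j q. Fweight p j q n * x n)"
proof -
  let ?w = "\<lambda>n. Fweight p j q n * x n"
  have right: "1 / real p * (\<Sum>i\<in>{1..<p}. real (p - i) * x (j + int i + 1)) = sum ?w {j + 2..j + int p}"
  proof -
    have "1 / real p * (\<Sum>i\<in>{1..<p}. real (p - i) * x (j + int i + 1))
        = (\<Sum>i\<in>{1..<p}. ?w (j + int i + 1))"
      unfolding sum_distrib_left by (intro sum.cong) (auto simp: Fweight_def of_nat_diff)
    also have "\<dots> = sum ?w {j + 2..j + int p}"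
      by (rule sum.reindex_bij_witness[of _ "\<lambda>n. nat (n - j - 1)" "\<lambda>i. j + int i + 1"]) auto
    finally show ?thesis .
  qed
  have left: "1 / real q * (\<Sum>i\<in>{1..<q}. real (q - i) * x (j - int i + 1)) = sum ?w {j - int q + 2..j}"
  proof -
    have "1 / real q * (\<Sum>i\<in>{1..<q}. real (q - i) * x (j - int i + 1))
        = (\<Sum>i\<in>{1..<q}. ?w (j - int i + 1))"
      unfolding sum_distrib_left by (intro sum.cong) (auto simp: Fweight_def of_nat_diff)
    also have "\<dots> = sum ?w {j - int q + 2..j}"
      by (rule sum.reindex_bij_witness[of _ "\<lambda>n. nat (j + 1 - n)" "\<lambda>i. j - int i + 1"]) auto
    finally show ?thesis .
  qed
  have "Fwindow p j q = {j - int q + 2..j} \<union> ({j + 1} \<union> {j + 2..j + int p})"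
    unfolding Fwindow_def using assms by auto
  then have "sum ?w (Fwindow p j q) = sum ?w {j - int q + 2..j} + (?w (j + 1) + sum ?w {j + 2..j + int p})"
    by (simp add: sum.union_disjoint)
  moreover have "Fweight p j q (j + 1) = 1" using assms by (simp add: Fweight_def)
  ultimately show ?thesis unfolding Fconst_def Ffun_def right left by simp
qed

lemma Fweight_bounds:
  assumes "1 \<le> p" "1 \<le> q" "n \<in> Fwindow p j q"
  shows "0 \<le> Fweight p j q n" "Fweight p j q n \<le> 1"
  using assms unfolding Fweight_def Fwindow_def by (auto simp: field_simps)

lemma sum_of_nat_diff_atLeastLessThan: "(\<Sum>i\<in>{1..<p}. real (p - i)) = real p * (real p - 1) / 2"
proof -
  have "(\<Sum>i\<in>{1..<p}. real (p - i)) = (\<Sum>i\<in>{1..<p}. real i)"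
    by (subst sum.atLeastLessThan_rev) (intro sum.cong; auto)
  also have "\<dots> = real p * (real p - 1) / 2"
    using double_gauss_sum_from_Suc_0[of "p - 1", where 'a=real]
    by (cases p) (auto simp: atLeastLessThanSuc_atLeastAtMost field_simps)
  finally show ?thesis .
qed

lemma sum_Fweight:
  assumes "1 \<le> p" "1 \<le> q"
  shows "(\<Sum>n\<in>Fwindow p j q. Fweight p j q n) = (real p + real q) / 2"
proof -
  have "(\<Sum>n\<in>Fwindow p j q. Fweight p j q n) = Fconst (\<lambda>_. 1) p j q"
    using Fconst_eq_sum_Fweight[OF assms, of "\<lambda>_. 1"] by simp
  also have "\<dots> = (real p + real q) / 2"
    unfolding Fconst_def Ffun_def using assms
    by (simp only: sum_of_nat_diff_atLeastLessThan mult_1_right) (simp add: field_simps)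
  finally show ?thesis .
qed

lemma Froot_measurable:
  assumes "\<And>n. n \<in> Fwindow p j q \<Longrightarrow> X n \<in> borel_measurable N" and "1 \<le> p" "1 \<le> q"
  shows "(\<lambda>\<omega>. Froot (\<lambda>n. X n \<omega>) p j q) \<in> borel_measurable N"
proof -
  have [measurable]: "(\<lambda>\<omega>. \<Sum>n\<in>Fwindow p j q. Fweight p j q n * X n \<omega>) \<in> borel_measurable N"
    using assms(1) by measurable
  show ?thesis unfolding Froot_def Fconst_eq_sum_Fweight[OF assms(2,3)] by measurable
qed

definition windows_within :: "int set \<Rightarrow> int \<Rightarrow> (nat \<times> nat) set" where
  "windows_within I i = {(p, q). 1 \<le> p \<and> 1 \<le> q \<and> Fwindow p i q \<subseteq> I}"

lemma exp_minus_le_quadratic: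
  assumes "0 \<le> (y::real)"
  shows "exp (- y) \<le> 1 - y + y\<^sup>2 / 2"
proof -
  let ?f = "\<lambda>y::real. 1 - y + y\<^sup>2 / 2 - exp (- y)"
  have "?f 0 \<le> ?f y"
  proof (rule DERIV_nonneg_imp_nondecreasing[OF assms])
    fix z :: real
    have "(?f has_real_derivative (z - 1 + exp (- z))) (at z)"
      by (auto intro!: derivative_eq_intros simp: power2_eq_square)
    moreover have "0 \<le> z - 1 + exp (- z)" using exp_ge_add_one_self[of "- z"] by simp
    ultimately show "\<exists>d. (?f has_real_derivative d) (at z) \<and> 0 \<le> d" by blast
  qed
  then show ?thesis by simp
qed

lemma exp_linear_smallo_powr: "0 < c \<Longrightarrow> (\<lambda>k::nat. exp (- c * real k)) \<in> o(\<lambda>k. real k powr s)"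
  by real_asymp

lemma exp_linear_smallo_one: "0 < c \<Longrightarrow> (\<lambda>k::nat. exp (- c * real k)) \<in> o(\<lambda>_. 1)"
  by real_asymp

lemma (in finite_measure) emeasure_UN_le_geometric:
  assumes "\<And>i. F i \<in> sets M" and "\<And>i. emeasure M (F i) \<le> ennreal (C * r ^ i)"
    and "0 \<le> C" "0 \<le> r" "r < 1"
  shows "emeasure M (\<Union>i. F i) \<le> ennreal (C / (1 - r))"
proof -
  have "emeasure M (\<Union>i. F i) \<le> (\<Sum>i. emeasure M (F i))"
    using assms(1) by (intro emeasure_subadditive_countably) auto
  also have "\<dots> \<le> (\<Sum>i. ennreal (C * r ^ i))"
    using assms(2) by (intro suminf_le) auto
  also have "\<dots> = ennreal (C * (1 / (1 - r)))"
    using assms(3-5) by (intro suminf_ennreal_eq sums_mult geometric_sums) auto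
  finally show ?thesis by simp
qed

lemma (in prob_space) prob_UN3_le_geometric:
  assumes "\<And>a b c. E a b c \<in> events" and "\<And>a b c. prob (E a b c) \<le> C * r ^ a * r ^ b * r ^ c"
    and "0 \<le> C" "0 \<le> r" "r < 1"
  shows "prob (\<Union>a. \<Union>b. \<Union>c. E a b c) \<le> C / (1 - r) ^ 3"
proof -
  have "0 < 1 - r" using assms by simp
  have bc: "emeasure M (\<Union>c. E a b c) \<le> ennreal (C * r ^ a * r ^ b / (1 - r))" for a b
    using assms by (intro emeasure_UN_le_geometric) (auto simp: emeasure_eq_measure ennreal_leI)
  have abc: "emeasure M (\<Union>b. \<Union>c. E a b c) \<le> ennreal (C * r ^ a / (1 - r) / (1 - r))" for a
  proof (rule emeasure_UN_le_geometric)
    show "emeasure M (\<Union>c. E a b c) \<le> ennreal (C * r ^ a / (1 - r) * r ^ b)" for b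
      using bc[of a b] by (simp add: field_simps)
  qed (use assms \<open>0 < 1 - r\<close> in auto)
  have "emeasure M (\<Union>a. \<Union>b. \<Union>c. E a b c) \<le> ennreal (C / (1 - r) / (1 - r) / (1 - r))"
  proof (rule emeasure_UN_le_geometric)
    show "emeasure M (\<Union>b. \<Union>c. E a b c) \<le> ennreal (C / (1 - r) / (1 - r) * r ^ a)" for a
      using abc[of a] by (simp add: field_simps)
  qed (use assms \<open>0 < 1 - r\<close> in auto)
  then show ?thesis
    using assms \<open>0 < 1 - r\<close> by (simp add: emeasure_eq_measure ennreal_le_iff power3_eq_cube)
qed

lemma sigma_sets_agree_outside:
  assumes "A \<in> sigma_sets \<Omega> G" and "sigma_algebra \<Omega> S" and "D \<subseteq> \<Omega>"
    and "\<And>g. g \<in> G \<Longrightarrow> \<exists>g'\<in>S. g \<inter> D = g' \<inter> D"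
  shows "\<exists>A'\<in>S. A \<inter> D = A' \<inter> D"
  using assms(1)
proof (induction rule: sigma_sets.induct)
  case (Basic a)
  then show ?case using assms(4) by auto
next
  case Empty
  then show ?case using assms(2) by (intro bexI[of _ "{}"]) (auto simp: sigma_algebra_iff2)
next
  case (Compl a)
  then obtain a' where "a' \<in> S" "a \<inter> D = a' \<inter> D" by auto
  then have "\<Omega> - a' \<in> S" "(\<Omega> - a) \<inter> D = (\<Omega> - a') \<inter> D"
    using assms(2,3) by (auto simp: sigma_algebra_iff2)
  then show ?case by blast
next
  case (Union a)
  then obtain f where f: "\<And>i. f i \<in> S" "\<And>i. a i \<inter> D = f i \<inter> D" by metis
  then have "(\<Union>i. f i) \<in> S" "(\<Union>i. a i) \<inter> D = (\<Union>i. f i) \<inter> D"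
    using assms(2) by (auto intro: sigma_algebra.countable_UN'')
  then show ?case by blast
qed

definition gen_measure :: "'a measure \<Rightarrow> (int \<Rightarrow> 'a \<Rightarrow> real) \<Rightarrow> int set \<Rightarrow> 'a measure" where
  "gen_measure M Y I = sigma (space M) {Y i -` B \<inter> space M | i B. i \<in> I \<and> B \<in> sets borel}"

lemma sets_gen_measure: "sets (gen_measure M Y I) = gen_sets M Y I"
  unfolding gen_measure_def gen_sets_def by (subst sets_measure_of) auto

lemma space_gen_measure: "space (gen_measure M Y I) = space M"
  unfolding gen_measure_def by (subst space_measure_of) auto

lemma measurable_gen_measure: "i \<in> I \<Longrightarrow> Y i \<in> borel_measurable (gen_measure M Y I)"
  unfolding measurable_def sets_gen_measure space_gen_measure gen_sets_def
  by (auto intro: sigma_sets.Basic)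

lemma gen_sets_subset_sets:
  "(\<And>i. i \<in> I \<Longrightarrow> Y i \<in> borel_measurable M) \<Longrightarrow> gen_sets M Y I \<subseteq> sets M"
  unfolding gen_sets_def by (rule sets.sigma_sets_subset) auto

lemma gen_sets_agree_outside:
  assumes "A \<in> gen_sets M Y J"
    and "\<And>i. i \<in> J \<Longrightarrow> Z i \<in> borel_measurable (gen_measure M X I)"
    and "\<And>i \<omega>. i \<in> J \<Longrightarrow> \<omega> \<in> space M - N \<Longrightarrow> Y i \<omega> = Z i \<omega>"
  shows "\<exists>A'\<in>gen_sets M X I. A \<inter> (space M - N) = A' \<inter> (space M - N)"
proof (rule sigma_sets_agree_outside[OF assms(1)[unfolded gen_sets_def]])
  show "sigma_algebra (space M) (gen_sets M X I)"
    unfolding gen_sets_def by (rule sigma_algebra_sigma_sets) auto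
  fix g assume "g \<in> {Y i -` B \<inter> space M | i B. i \<in> J \<and> B \<in> sets borel}"
  then obtain i B where g: "g = Y i -` B \<inter> space M" "i \<in> J" "B \<in> sets borel" by auto
  have "Z i -` B \<inter> space M \<in> gen_sets M X I"
    using measurable_sets[OF assms(2)[OF g(2)] g(3)] by (simp add: sets_gen_measure space_gen_measure)
  moreover have "g \<inter> (space M - N) = (Z i -` B \<inter> space M) \<inter> (space M - N)"
    using assms(3)[OF g(2)] unfolding g(1) by auto
  ultimately show "\<exists>g'\<in>gen_sets M X I. g \<inter> (space M - N) = g' \<inter> (space M - N)" by blast
qed auto

context prob_space
begin

lemma integrable_power2_of_powr:
  fixes f :: "'a \<Rightarrow> real"
  assumes [measurable]: "f \<in> borel_measurable M" and "\<And>\<omega>. \<omega> \<in> space M \<Longrightarrow> 0 \<le> f \<omega>"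
    and "2 \<le> \<gamma>" "integrable M (\<lambda>\<omega>. f \<omega> powr \<gamma>)"
  shows "integrable M (\<lambda>\<omega>. (f \<omega>)\<^sup>2)"
proof (rule Bochner_Integration.integrable_bound)
  show "integrable M (\<lambda>\<omega>. 1 + f \<omega> powr \<gamma>)" using assms(4) by simp
  show "AE \<omega> in M. norm ((f \<omega>)\<^sup>2) \<le> norm (1 + f \<omega> powr \<gamma>)"
  proof (rule AE_I2)
    fix \<omega> assume "\<omega> \<in> space M"
    then have "0 \<le> f \<omega>" by (rule assms(2))
    have "(f \<omega>)\<^sup>2 \<le> 1 + f \<omega> powr \<gamma>"
    proof (cases "f \<omega> \<le> 1")
      case True
      then have "(f \<omega>)\<^sup>2 \<le> 1" using \<open>0 \<le> f \<omega>\<close> using mult_mono[of "f \<omega>" 1 "f \<omega>" 1] by (simp add: power2_eq_square)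
      then show ?thesis using powr_ge_zero[of "f \<omega>" \<gamma>] by linarith
    next
      case False
      then have "(f \<omega>)\<^sup>2 \<le> f \<omega> powr \<gamma>"
        using assms(3) powr_mono[of 2 \<gamma> "f \<omega>"] by (simp add: powr_numeral)
      then show ?thesis by simp
    qed
    then show "norm ((f \<omega>)\<^sup>2) \<le> norm (1 + f \<omega> powr \<gamma>)" by simp
  qed
qed simp

lemma indep_vars_reindex:
  assumes "indep_vars (\<lambda>_. N) X UNIV" and "inj f"
  shows "indep_vars (\<lambda>_. N) (\<lambda>i. X (f i)) UNIV"
proof -
  have ind: "indep_sets (\<lambda>i. {X i -` A \<inter> space M | A. A \<in> sets N}) UNIV"
    using assms(1) unfolding indep_vars_def2 by auto
  have "indep_sets (\<lambda>i. {X (f i) -` A \<inter> space M | A. A \<in> sets N}) UNIV"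
  proof (rule indep_setsI)
    show "{X (f i) -` A \<inter> space M | A. A \<in> sets N} \<subseteq> events" for i
      using assms(1) unfolding indep_vars_def2 by (auto intro: measurable_sets)
    fix A J assume J: "J \<noteq> {}" "finite J"
      and A: "\<forall>j\<in>J. A j \<in> {X (f j) -` A \<inter> space M | A. A \<in> sets N}"
    have inj: "inj_on f J" using assms(2) by (rule inj_on_subset) simp
    have "prob (\<Inter>n\<in>f ` J. A (inv f n)) = (\<Prod>n\<in>f ` J. prob (A (inv f n)))"
      by (rule indep_setsD[OF ind]) (use J A assms(2) in auto)
    then show "prob (\<Inter>j\<in>J. A j) = (\<Prod>j\<in>J. prob (A j))"
      using assms(2) by (simp add: prod.reindex[OF inj])
  qed
  then show ?thesis using assms(1) unfolding indep_vars_def2 by auto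
qed

lemma prob_Int_gen_sets_disjoint:
  assumes "indep_vars (\<lambda>_. borel) X UNIV" and "I \<inter> J = {}"
    and "A \<in> gen_sets M X I" "B \<in> gen_sets M X J"
  shows "prob (A \<inter> B) = prob A * prob B"
proof -
  define E where "E = (\<lambda>n. {X n -` A \<inter> space M | A. A \<in> sets (borel :: real measure)})"
  define K where "K = (\<lambda>b::bool. if b then I else J)"
  have "indep_sets E UNIV"
    using assms(1) unfolding indep_vars_def2 E_def by auto
  then have "indep_sets E (\<Union>b. K b)"
    by (rule indep_sets_mono_index[rotated]) auto
  moreover have "Int_stable (E n)" for n
    unfolding Int_stable_def E_def by safe (metis (no_types) sets.Int vimage_Int Int_left_commute Int_assoc Int_absorb)
  moreover have "disjoint_family_on K UNIV"
    using assms(2) unfolding disjoint_family_on_def K_def by auto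
  ultimately have ind: "indep_sets (\<lambda>b. sigma_sets (space M) (\<Union>n\<in>K b. E n)) UNIV"
    by (rule indep_sets_collect_sigma)
  have "gen_sets M X L = sigma_sets (space M) (\<Union>n\<in>L. E n)" for L
    unfolding gen_sets_def E_def by (intro arg_cong[where f="sigma_sets _"]) auto
  then have "prob (\<Inter>b. if b then A else B) = (\<Prod>b\<in>UNIV. prob (if b then A else B))"
    using assms(3,4) by (intro indep_setsD[OF ind]) (auto simp: K_def)
  then show ?thesis by (simp add: UNIV_bool Int_commute)
qed

lemma abs_prob_diff_le_of_agree_outside:
  assumes "E \<in> events" "F \<in> events" "N \<in> events"
    and "E \<inter> (space M - N) = F \<inter> (space M - N)"
  shows "\<bar>prob E - prob F\<bar> \<le> prob N"
proof -
  have "E \<subseteq> F \<union> N" "F \<subseteq> E \<union> N"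
    using assms(4) sets.sets_into_space[OF assms(1)] sets.sets_into_space[OF assms(2)] by blast+
  then have "prob E \<le> prob (F \<union> N)" "prob F \<le> prob (E \<union> N)"
    using assms by (auto intro!: finite_measure_mono)
  moreover have "prob (F \<union> N) \<le> prob F + prob N" "prob (E \<union> N) \<le> prob E + prob N"
    using assms by (auto intro!: measure_Un_le)
  ultimately show ?thesis by linarith
qed

lemma abs_prob_Int_diff_le_of_agree_outside:
  assumes "A \<in> events" "B \<in> events" "A' \<in> events" "B' \<in> events" "N \<in> events"
    and "A \<inter> (space M - N) = A' \<inter> (space M - N)" "B \<inter> (space M - N) = B' \<inter> (space M - N)"
    and "prob (A' \<inter> B') = prob A' * prob B'"
  shows "\<bar>prob (A \<inter> B) - prob A * prob B\<bar> \<le> 3 * prob N"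
proof -
  have "(A \<inter> B) \<inter> (space M - N) = (A' \<inter> B') \<inter> (space M - N)" using assms(6,7) by blast
  then have "\<bar>prob (A \<inter> B) - prob (A' \<inter> B')\<bar> \<le> prob N"
    using assms by (intro abs_prob_diff_le_of_agree_outside) auto
  moreover have "\<bar>prob A - prob A'\<bar> \<le> prob N" "\<bar>prob B - prob B'\<bar> \<le> prob N"
    using assms by (auto intro!: abs_prob_diff_le_of_agree_outside)
  moreover have "\<bar>prob A * prob B - prob A' * prob B'\<bar> \<le> \<bar>prob B - prob B'\<bar> + \<bar>prob A - prob A'\<bar>"
  proof -
    have "prob A * prob B - prob A' * prob B' = prob A * (prob B - prob B') + prob B' * (prob A - prob A')"
      by (simp add: algebra_simps)
    moreover have "\<bar>prob A * (prob B - prob B')\<bar> \<le> \<bar>prob B - prob B'\<bar>"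
      "\<bar>prob B' * (prob A - prob A')\<bar> \<le> \<bar>prob A - prob A'\<bar>"
      by (auto simp: abs_mult intro!: mult_left_le_one_le)
    ultimately show ?thesis by linarith
  qed
  ultimately show ?thesis using assms(8) by linarith
qed

lemma mixing_coeff_nonneg: "0 \<le> mixing_coeff M Y k"
proof -
  let ?f = "\<lambda>p. \<bar>prob (fst p \<inter> snd p) - prob (fst p) * prob (snd p)\<bar>"
  let ?S = "gen_sets M Y {..0} \<times> gen_sets M Y {k..}"
  have "({}, {}) \<in> ?S" unfolding gen_sets_def by (auto intro: sigma_sets.Empty)
  moreover have "bdd_above (?f ` ?S)"
  proof (rule bdd_aboveI)
    fix x assume "x \<in> ?f ` ?S"
    then obtain a b where x: "x = \<bar>prob (a \<inter> b) - prob a * prob b\<bar>" by auto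
    have "prob (a \<inter> b) \<le> 1" "0 \<le> prob (a \<inter> b)" "prob a * prob b \<le> 1" "0 \<le> prob a * prob b"
      by (auto intro!: mult_le_one)
    then show "x \<le> 1" unfolding x abs_le_iff by linarith
  qed
  ultimately have "?f ({}, {}) \<le> (SUP p\<in>?S. ?f p)" by (rule cSUP_upper)
  then show ?thesis unfolding mixing_coeff_def by simp
qed

lemma mixing_coeff_le:
  assumes "\<And>A B. A \<in> gen_sets M Y {..0} \<Longrightarrow> B \<in> gen_sets M Y {k..} \<Longrightarrow>
      \<bar>prob (A \<inter> B) - prob A * prob B\<bar> \<le> c"
  shows "mixing_coeff M Y k \<le> c"
  unfolding mixing_coeff_def
proof (rule cSUP_least)
  show "gen_sets M Y {..0} \<times> gen_sets M Y {k..} \<noteq> {}"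
    unfolding gen_sets_def by (auto intro: sigma_sets.Empty)
qed (use assms in auto)

end

section \<open>Stationarity\<close>

(* Clamping the path at 0 makes this a measurable function of every path, agreeing with
   min (Tfun x i) t on nonnegative ones. *)
definition Tmin_path :: "real \<Rightarrow> (int \<Rightarrow> real) \<Rightarrow> int \<Rightarrow> real" where
  "Tmin_path t x = (\<lambda>i. min (INF (p, q)\<in>{1..} \<times> {1..}. Froot (\<lambda>n. max (x n) 0) p i q) t)"

lemma Tmin_path_measurable:
  "Tmin_path t \<in> measurable (Pi\<^sub>M UNIV (\<lambda>_. borel)) (Pi\<^sub>M UNIV (\<lambda>_. borel))"
  unfolding Tmin_path_def
proof (rule measurable_PiM_single')
  fix i :: int
  have "(\<lambda>x. INF (p, q)\<in>{1..} \<times> {1..}. Froot (\<lambda>n. max (x n) 0) p i q) \<in> borel_measurable (Pi\<^sub>M UNIV (\<lambda>_. borel))"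
    unfolding Froot_def Fconst_def Ffun_def by (intro borel_measurable_cINF_real) (auto simp: split_beta)
  then show "(\<lambda>x. min (INF (p, q)\<in>{1..} \<times> {1..}. Froot (\<lambda>n. max (x n) 0) p i q) t) \<in> borel_measurable (Pi\<^sub>M UNIV (\<lambda>_. borel))"
    by measurable
qed auto

lemma Tmin_path_eq:
  assumes "\<And>n. 0 \<le> x n"
  shows "Tmin_path t x i = min (Tfun x i) t"
  using assms by (simp add: Tmin_path_def Tfun_eq_INF_Froot max_absorb1)

locale iid_nonneg = prob_space +
  fixes X :: "int \<Rightarrow> 'a \<Rightarrow> real"
  assumes X_measurable[measurable]: "\<And>i. X i \<in> borel_measurable M"
    and X_indep: "indep_vars (\<lambda>_. borel) X UNIV"
    and X_ident: "\<And>i. distr M borel (X i) = distr M borel (X 0)"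
    and X_nonneg: "\<And>i \<omega>. \<omega> \<in> space M \<Longrightarrow> 0 \<le> X i \<omega>"
begin

lemma distr_reindex_eq_PiM:
  assumes "inj f"
  shows "distr M (Pi\<^sub>M UNIV (\<lambda>_. borel)) (\<lambda>\<omega> n. X (f n) \<omega>) = Pi\<^sub>M UNIV (\<lambda>_. distr M borel (X 0))"
proof -
  have "distr M (Pi\<^sub>M UNIV (\<lambda>_. borel)) (\<lambda>\<omega>. \<lambda>n\<in>UNIV. X (f n) \<omega>) = Pi\<^sub>M UNIV (\<lambda>n. distr M borel (X (f n)))"
    using indep_vars_iff_distr_eq_PiM[where I=UNIV and X="\<lambda>n. X (f n)"]
      indep_vars_reindex[OF X_indep assms] by auto
  also have "\<dots> = Pi\<^sub>M UNIV (\<lambda>_. distr M borel (X 0))"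
    using X_ident by (intro PiM_cong) auto
  finally show ?thesis by (simp add: restrict_def)
qed

lemma distr_shift_eq:
  "distr M (Pi\<^sub>M UNIV (\<lambda>_. borel)) (\<lambda>\<omega> n. X (n + 1) \<omega>) = distr M (Pi\<^sub>M UNIV (\<lambda>_. borel)) (\<lambda>\<omega> n. X n \<omega>)"
  using distr_reindex_eq_PiM[of "\<lambda>n. n + 1"] distr_reindex_eq_PiM[of id] by (simp add: inj_def)

lemma integral_X_eq:
  assumes [measurable]: "(g :: real \<Rightarrow> real) \<in> borel_measurable borel"
  shows "(\<integral>\<omega>. g (X n \<omega>) \<partial>M) = (\<integral>\<omega>. g (X 0 \<omega>) \<partial>M)"
  using integral_distr[of "X n" M borel g] integral_distr[of "X 0" M borel g] X_ident[of n] by simp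

lemma integrable_exp_minus_X: "0 \<le> u \<Longrightarrow> integrable M (\<lambda>\<omega>. exp (- u * X n \<omega>))"
  using X_nonneg by (intro integrable_const_bound[where B=1] AE_I2) auto

end

locale Tmin_process = iid_nonneg +
  fixes t :: real
  assumes integrable_X0: "integrable M (X 0)" and mean_X0: "(\<integral>\<omega>. X 0 \<omega> \<partial>M) = 1"
    and integrable_X0_sq: "integrable M (\<lambda>\<omega>. (X 0 \<omega>)\<^sup>2)"
    and t_less_1: "t < 1"
begin

definition Y :: "int \<Rightarrow> 'a \<Rightarrow> real" where
  "Y i \<omega> = min (Tfun (\<lambda>n. X n \<omega>) i) t"

definition second_moment :: real where
  "second_moment = (\<integral>\<omega>. (X 0 \<omega>)\<^sup>2 \<partial>M)"

lemma second_moment_nonneg: "0 \<le> second_moment"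
  unfolding second_moment_def by simp

lemma Y_eq_Tmin_path: "\<omega> \<in> space M \<Longrightarrow> Y i \<omega> = Tmin_path t (\<lambda>n. X n \<omega>) i"
  using X_nonneg by (simp add: Y_def Tmin_path_eq)

lemma Y_shift_eq_Tmin_path: "\<omega> \<in> space M \<Longrightarrow> Y (i + 1) \<omega> = Tmin_path t (\<lambda>n. X (n + 1) \<omega>) i"
  using X_nonneg by (simp add: Y_def Tfun_shift Tmin_path_eq)

lemma Y_measurable[measurable]: "Y i \<in> borel_measurable M"
proof -
  have "(\<lambda>\<omega> n. X n \<omega>) \<in> measurable M (Pi\<^sub>M UNIV (\<lambda>_. borel))"
    by (rule measurable_PiM_single') auto
  then have "(\<lambda>\<omega>. Tmin_path t (\<lambda>n. X n \<omega>) i) \<in> borel_measurable M"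
    using Tmin_path_measurable by measurable
  then show ?thesis by (rule measurable_cong[THEN iffD1, rotated]) (simp add: Y_eq_Tmin_path)
qed

lemma Y_stationary:
  "distr M (Pi\<^sub>M UNIV (\<lambda>_. borel)) (\<lambda>\<omega> i. Y (i + 1) \<omega>) = distr M (Pi\<^sub>M UNIV (\<lambda>_. borel)) (\<lambda>\<omega> i. Y i \<omega>)"
proof -
  have meas: "(\<lambda>\<omega> n. X (f n) \<omega>) \<in> measurable M (Pi\<^sub>M UNIV (\<lambda>_. borel))" for f :: "int \<Rightarrow> int"
    by (rule measurable_PiM_single') auto
  have "distr M (Pi\<^sub>M UNIV (\<lambda>_. borel)) (\<lambda>\<omega> i. Y (i + 1) \<omega>)
      = distr (distr M (Pi\<^sub>M UNIV (\<lambda>_. borel)) (\<lambda>\<omega> n. X (n + 1) \<omega>)) (Pi\<^sub>M UNIV (\<lambda>_. borel)) (Tmin_path t)"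
    using distr_distr[OF Tmin_path_measurable meas[of "\<lambda>n. n + 1"]]
    by (simp add: comp_def Y_shift_eq_Tmin_path cong: distr_cong)
  also have "\<dots> = distr (distr M (Pi\<^sub>M UNIV (\<lambda>_. borel)) (\<lambda>\<omega> n. X n \<omega>)) (Pi\<^sub>M UNIV (\<lambda>_. borel)) (Tmin_path t)"
    by (simp only: distr_shift_eq)
  also have "\<dots> = distr M (Pi\<^sub>M UNIV (\<lambda>_. borel)) (\<lambda>\<omega> i. Y i \<omega>)"
    using distr_distr[OF Tmin_path_measurable meas[of id]]
    by (simp add: comp_def Y_eq_Tmin_path cong: distr_cong)
  finally show ?thesis .
qed

section \<open>A Chernoff bound for the roots\<close>

lemma integral_exp_minus_X_le:
  assumes "0 \<le> u"
  shows "(\<integral>\<omega>. exp (- u * X n \<omega>) \<partial>M) \<le> exp (- u + u\<^sup>2 * second_moment / 2)"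
proof -
  have "(\<integral>\<omega>. exp (- u * X n \<omega>) \<partial>M) = (\<integral>\<omega>. exp (- u * X 0 \<omega>) \<partial>M)"
    by (rule integral_X_eq) simp
  also have "\<dots> \<le> (\<integral>\<omega>. 1 - u * X 0 \<omega> + u\<^sup>2 / 2 * (X 0 \<omega>)\<^sup>2 \<partial>M)"
  proof (rule integral_mono)
    fix \<omega> assume "\<omega> \<in> space M"
    then have "exp (- (u * X 0 \<omega>)) \<le> 1 - u * X 0 \<omega> + (u * X 0 \<omega>)\<^sup>2 / 2"
      using X_nonneg assms by (intro exp_minus_le_quadratic) simp
    then show "exp (- u * X 0 \<omega>) \<le> 1 - u * X 0 \<omega> + u\<^sup>2 / 2 * (X 0 \<omega>)\<^sup>2"
      by (simp add: power_mult_distrib)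
  qed (use integrable_exp_minus_X assms integrable_X0 integrable_X0_sq in auto)
  also have "\<dots> = 1 - u + u\<^sup>2 * second_moment / 2"
    using integrable_X0 integrable_X0_sq mean_X0 unfolding second_moment_def by (simp add: prob_space)
  also have "\<dots> \<le> exp (- u + u\<^sup>2 * second_moment / 2)"
    using exp_ge_add_one_self[of "- u + u\<^sup>2 * second_moment / 2"] by (simp add: algebra_simps)
  finally show ?thesis .
qed

(* second_moment + 1 stands in for second_moment (which is at least 1 anyway) only because its
   positivity is immediate. *)
lemma integral_exp_minus_Fconst_le:
  assumes "0 \<le> l" "1 \<le> p" "1 \<le> q"
  shows "(\<integral>\<omega>. exp (- l * Fconst (\<lambda>n. X n \<omega>) p j q) \<partial>M)
    \<le> exp ((- l + l\<^sup>2 * (second_moment + 1) / 2) * ((real p + real q) / 2))"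
proof -
  let ?W = "Fwindow p j q" and ?w = "Fweight p j q"
  have fin: "finite ?W" unfolding Fwindow_def by simp
  have "(\<integral>\<omega>. exp (- l * Fconst (\<lambda>n. X n \<omega>) p j q) \<partial>M)
      = (\<integral>\<omega>. (\<Prod>n\<in>?W. exp (- (l * ?w n) * X n \<omega>)) \<partial>M)"
    using fin by (simp add: Fconst_eq_sum_Fweight[OF assms(2,3)] sum_distrib_left exp_sum
        flip: sum_negf mult.assoc)
  also have "\<dots> = (\<Prod>n\<in>?W. \<integral>\<omega>. exp (- (l * ?w n) * X n \<omega>) \<partial>M)"
  proof (rule indep_vars_lebesgue_integral[OF fin])
    have "indep_vars (\<lambda>_. borel) X ?W" by (rule indep_vars_subset[OF X_indep]) auto
    then show "indep_vars (\<lambda>_. borel) (\<lambda>n \<omega>. exp (- (l * ?w n) * X n \<omega>)) ?W"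
      by (rule indep_vars_compose2[where Y="\<lambda>n x. exp (- (l * ?w n) * x)"]) auto
    show "integrable M (\<lambda>\<omega>. exp (- (l * ?w n) * X n \<omega>))" if "n \<in> ?W" for n
      using that Fweight_bounds[OF assms(2,3)] assms(1) by (intro integrable_exp_minus_X) simp
  qed
  also have "\<dots> \<le> (\<Prod>n\<in>?W. exp ((- l + l\<^sup>2 * (second_moment + 1) / 2) * ?w n))"
  proof (rule prod_mono)
    fix n assume "n \<in> ?W"
    then have w: "0 \<le> ?w n" "?w n \<le> 1" using Fweight_bounds[OF assms(2,3)] by auto
    have "(?w n)\<^sup>2 * second_moment \<le> ?w n * (second_moment + 1)"
      using w second_moment_nonneg by (intro mult_mono) (auto simp: power2_eq_square mult_left_le_one_le)
    then have "l\<^sup>2 * ((?w n)\<^sup>2 * second_moment) \<le> l\<^sup>2 * (?w n * (second_moment + 1))"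
      by (rule mult_left_mono) simp
    then have "- (l * ?w n) + (l * ?w n)\<^sup>2 * second_moment / 2 \<le> (- l + l\<^sup>2 * (second_moment + 1) / 2) * ?w n"
      by (simp add: power_mult_distrib algebra_simps)
    then have "exp (- (l * ?w n) + (l * ?w n)\<^sup>2 * second_moment / 2)
        \<le> exp ((- l + l\<^sup>2 * (second_moment + 1) / 2) * ?w n)"
      by simp
    then have "(\<integral>\<omega>. exp (- (l * ?w n) * X n \<omega>) \<partial>M) \<le> exp ((- l + l\<^sup>2 * (second_moment + 1) / 2) * ?w n)"
      using order_trans[OF integral_exp_minus_X_le[of "l * ?w n" n]] w assms(1) by simp
    then show "0 \<le> (\<integral>\<omega>. exp (- (l * ?w n) * X n \<omega>) \<partial>M) \<and>
        (\<integral>\<omega>. exp (- (l * ?w n) * X n \<omega>) \<partial>M) \<le> exp ((- l + l\<^sup>2 * (second_moment + 1) / 2) * ?w n)"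
      by simp
  qed
  also have "\<dots> = exp ((- l + l\<^sup>2 * (second_moment + 1) / 2) * ((real p + real q) / 2))"
    using fin by (simp add: exp_sum sum_distrib_left[symmetric] sum_Fweight[OF assms(2,3)] flip: exp_sum)
  finally show ?thesis .
qed

lemma prob_Froot_less:
  assumes "0 \<le> \<tau>" "\<tau> < 1" "1 \<le> p" "1 \<le> q"
  shows "prob {\<omega>\<in>space M. Froot (\<lambda>n. X n \<omega>) p j q < \<tau>}
    \<le> exp (- ((1 - \<tau>\<^sup>2)\<^sup>2 / (4 * (second_moment + 1))) * (real p + real q))"
proof -
  define B where "B = second_moment + 1"
  define N where "N = real p + real q"
  define l where "l = (1 - \<tau>\<^sup>2) / B"
  define a where "a = \<tau>\<^sup>2 * N / 2"
  have "0 < B" "0 < N" using second_moment_nonneg assms unfolding B_def N_def by auto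
  have "\<tau>\<^sup>2 < 1" using assms by (simp add: power_less_one_iff abs_less_iff)
  then have "0 < l" unfolding l_def using \<open>0 < B\<close> by simp
  have Fconst_nonneg': "0 \<le> Fconst (\<lambda>n. X n \<omega>) p j q" if "\<omega> \<in> space M" for \<omega>
    using X_nonneg[OF that] by (intro Fconst_nonneg)
  have integrable: "integrable M (\<lambda>\<omega>. exp (- l * Fconst (\<lambda>n. X n \<omega>) p j q))"
    using Fconst_nonneg' \<open>0 < l\<close>
    by (intro integrable_const_bound[where B=1] AE_I2) (auto simp: Fconst_def Ffun_def)
  have "{\<omega>\<in>space M. Froot (\<lambda>n. X n \<omega>) p j q < \<tau>} \<subseteq> {\<omega>\<in>space M. Fconst (\<lambda>n. X n \<omega>) p j q \<le> a}"
  proof safe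
    fix \<omega> assume "\<omega> \<in> space M" "Froot (\<lambda>n. X n \<omega>) p j q < \<tau>"
    then have "2 * Fconst (\<lambda>n. X n \<omega>) p j q / N < \<tau>\<^sup>2"
      using Fconst_nonneg' \<open>0 < N\<close> unfolding Froot_def N_def
      by (metis divide_nonneg_pos mult_nonneg_nonneg real_sqrt_less_iff real_sqrt_pow2 zero_le_numeral
          assms(1) real_sqrt_power)
    then show "Fconst (\<lambda>n. X n \<omega>) p j q \<le> a" using \<open>0 < N\<close> unfolding a_def by (simp add: field_simps)
  qed
  then have "prob {\<omega>\<in>space M. Froot (\<lambda>n. X n \<omega>) p j q < \<tau>} \<le> prob {\<omega>\<in>space M. Fconst (\<lambda>n. X n \<omega>) p j q \<le> a}"
    by (intro finite_measure_mono) (auto simp: Fconst_def Ffun_def)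
  also have "\<dots> \<le> exp (l * a) * (\<integral>\<omega>. exp (- l * Fconst (\<lambda>n. X n \<omega>) p j q) \<partial>M)"
    using Chernoff_ineq_le[OF \<open>0 < l\<close>, of "space M" "\<lambda>\<omega>. Fconst (\<lambda>n. X n \<omega>) p j q" a]
      integrable integrable_mult_indicator[OF sets.top integrable]
    by (simp add: set_integral_space set_integrable_def)
  also have "\<dots> \<le> exp (l * a) * exp ((- l + l\<^sup>2 * B / 2) * (N / 2))"
    using integral_exp_minus_Fconst_le[OF less_imp_le[OF \<open>0 < l\<close>] assms(3,4)]
    unfolding B_def N_def by simp
  also have "\<dots> = exp (- ((1 - \<tau>\<^sup>2)\<^sup>2 / (4 * B)) * N)"
    unfolding exp_add[symmetric] l_def a_def using \<open>0 < B\<close> by (simp add: field_simps power2_eq_square)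
  finally show ?thesis unfolding B_def N_def .
qed

section \<open>Localisation and mixing\<close>

(* The Chernoff bound needs a nonnegative level, and t may be negative. *)
definition tau0 :: real where
  "tau0 = max t 0"

definition rate :: real where
  "rate = (1 - tau0\<^sup>2)\<^sup>2 / (4 * (second_moment + 1))"

lemma rate_pos: "0 < rate"
proof -
  have "tau0\<^sup>2 < 1" using t_less_1 unfolding tau0_def by (simp add: power_less_one_iff abs_less_iff)
  then show ?thesis unfolding rate_def using second_moment_nonneg by simp
qed

lemma prob_Froot_less_t:
  assumes "1 \<le> p" "1 \<le> q"
  shows "prob {\<omega>\<in>space M. Froot (\<lambda>n. X n \<omega>) p j q < t} \<le> exp (- rate * (real p + real q))"
proof -
  have "prob {\<omega>\<in>space M. Froot (\<lambda>n. X n \<omega>) p j q < t} \<le> prob {\<omega>\<in>space M. Froot (\<lambda>n. X n \<omega>) p j q < tau0}"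
    unfolding tau0_def by (intro finite_measure_mono) (auto simp: Froot_def Fconst_def Ffun_def)
  also have "\<dots> \<le> exp (- rate * (real p + real q))"
    unfolding rate_def using prob_Froot_less[OF _ _ assms] t_less_1 by (simp add: tau0_def)
  finally show ?thesis .
qed

lemma exp_rate_le:
  assumes "real m + real a + real b + real c \<le> s"
  shows "exp (- rate * s) \<le> exp (- rate * real m) * exp (- rate) ^ a * exp (- rate) ^ b * exp (- rate) ^ c"
proof -
  have "exp (- rate * s) \<le> exp (- rate * (real m + real a + real b + real c))"
    using assms rate_pos by simp
  then show ?thesis by (simp add: exp_of_nat_mult[symmetric] exp_add[symmetric] algebra_simps)
qed

definition Y_local :: "int set \<Rightarrow> int \<Rightarrow> 'a \<Rightarrow> real" where
  "Y_local I i \<omega> = min (INF (p, q)\<in>windows_within I i. Froot (\<lambda>n. X n \<omega>) p i q) t"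

lemma Y_local_measurable: "Y_local I i \<in> borel_measurable (gen_measure M X I)"
proof -
  have "(\<lambda>\<omega>. INF (p, q)\<in>windows_within I i. Froot (\<lambda>n. X n \<omega>) p i q) \<in> borel_measurable (gen_measure M X I)"
  proof (rule borel_measurable_cINF_real)
    show "countable (windows_within I i)" by simp
    fix pq assume "pq \<in> windows_within I i"
    then show "(\<lambda>\<omega>. case pq of (p, q) \<Rightarrow> Froot (\<lambda>n. X n \<omega>) p i q) \<in> borel_measurable (gen_measure M X I)"
      by (auto simp: windows_within_def intro!: Froot_measurable measurable_gen_measure)
  qed
  then show ?thesis unfolding Y_local_def by measurable
qed

lemma Y_eq_Y_local:
  assumes "\<omega> \<in> space M" "windows_within I i \<noteq> {}"
    and "\<And>p q. 1 \<le> p \<Longrightarrow> 1 \<le> q \<Longrightarrow> (p, q) \<notin> windows_within I i \<Longrightarrow> t \<le> Froot (\<lambda>n. X n \<omega>) p i q"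
  shows "Y i \<omega> = Y_local I i \<omega>"
proof -
  let ?f = "\<lambda>(p, q). Froot (\<lambda>n. X n \<omega>) p i q"
  let ?S = "windows_within I i" and ?R = "{1..} \<times> {1..} - windows_within I i"
  have bdd: "bdd_below (?f ` T)" for T
    using X_nonneg[OF assms(1)] by (intro bdd_belowI[of _ 0]) (auto intro: Froot_nonneg)
  have Y: "Y i \<omega> = min (INF pq\<in>{1..} \<times> {1..}. ?f pq) t"
    using X_nonneg[OF assms(1)] by (simp add: Y_def Tfun_eq_INF_Froot)
  show ?thesis
  proof (cases "?R = {}")
    case True
    then have "{1..} \<times> {1..} = ?S" by (auto simp: windows_within_def)
    then show ?thesis using Y unfolding Y_local_def by simp
  next
    case False
    have U: "{1..} \<times> {1..} = ?S \<union> ?R" by (auto simp: windows_within_def)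
    have "(INF pq\<in>{1..} \<times> {1..}. ?f pq) = min (INF pq\<in>?S. ?f pq) (INF pq\<in>?R. ?f pq)"
      by (subst U, subst cINF_union) (use assms(2) False bdd in \<open>auto simp: inf_min\<close>)
    moreover have "t \<le> (INF pq\<in>?R. ?f pq)" using False assms(3) by (intro cINF_greatest) auto
    ultimately show ?thesis using Y unfolding Y_local_def by linarith
  qed
qed

(* All pairs (p, q) at a site i <= 0 whose window reaches beyond m, resp. at a site i >= k whose
   window reaches below m + 1, indexed by natural numbers so that the bounds form geometric series. *)
definition past_bad :: "nat \<Rightarrow> 'a set" where
  "past_bad m = (\<Union>a. \<Union>b. \<Union>l. {\<omega>\<in>space M. Froot (\<lambda>n. X n \<omega>) (m + a + 1 + b) (- int a) (l + 1) < t})"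

definition future_bad :: "nat \<Rightarrow> nat \<Rightarrow> 'a set" where
  "future_bad k m = (\<Union>a. \<Union>b. \<Union>p. {\<omega>\<in>space M. Froot (\<lambda>n. X n \<omega>) (p + 1) (int k + int a) (k + a + 2 + b - m) < t})"

lemma past_bad_event: "past_bad m \<in> events"
  unfolding past_bad_def Froot_def Fconst_def Ffun_def by measurable

lemma future_bad_event: "future_bad k m \<in> events"
  unfolding future_bad_def Froot_def Fconst_def Ffun_def by measurable

lemma prob_past_bad: "prob (past_bad m) \<le> exp (- rate * real m) / (1 - exp (- rate)) ^ 3"
  unfolding past_bad_def
proof (rule prob_UN3_le_geometric)
  fix a b l
  have "prob {\<omega>\<in>space M. Froot (\<lambda>n. X n \<omega>) (m + a + 1 + b) (- int a) (l + 1) < t}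
      \<le> exp (- rate * (real (m + a + 1 + b) + real (l + 1)))"
    by (rule prob_Froot_less_t) auto
  also have "\<dots> \<le> exp (- rate * real m) * exp (- rate) ^ a * exp (- rate) ^ b * exp (- rate) ^ l"
    by (rule exp_rate_le) auto
  finally show "prob {\<omega>\<in>space M. Froot (\<lambda>n. X n \<omega>) (m + a + 1 + b) (- int a) (l + 1) < t}
      \<le> exp (- rate * real m) * exp (- rate) ^ a * exp (- rate) ^ b * exp (- rate) ^ l" .
qed (use rate_pos in \<open>auto simp: Froot_def Fconst_def Ffun_def\<close>)

lemma prob_future_bad:
  assumes "2 * m \<le> k"
  shows "prob (future_bad k m) \<le> exp (- rate * real m) / (1 - exp (- rate)) ^ 3"
  unfolding future_bad_def
proof (rule prob_UN3_le_geometric)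
  fix a b p
  have "prob {\<omega>\<in>space M. Froot (\<lambda>n. X n \<omega>) (p + 1) (int k + int a) (k + a + 2 + b - m) < t}
      \<le> exp (- rate * (real (p + 1) + real (k + a + 2 + b - m)))"
    by (rule prob_Froot_less_t) (use assms in auto)
  also have "\<dots> \<le> exp (- rate * real m) * exp (- rate) ^ a * exp (- rate) ^ b * exp (- rate) ^ p"
    by (rule exp_rate_le) (use assms in auto)
  finally show "prob {\<omega>\<in>space M. Froot (\<lambda>n. X n \<omega>) (p + 1) (int k + int a) (k + a + 2 + b - m) < t}
      \<le> exp (- rate * real m) * exp (- rate) ^ a * exp (- rate) ^ b * exp (- rate) ^ p" .
qed (use rate_pos in \<open>auto simp: Froot_def Fconst_def Ffun_def\<close>)

lemma Y_eq_Y_local_past: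
  assumes "\<omega> \<in> space M - past_bad m" "i \<le> 0" "1 \<le> m"
  shows "Y i \<omega> = Y_local {..int m} i \<omega>"
proof (rule Y_eq_Y_local)
  show "windows_within {..int m} i \<noteq> {}"
    using assms(2,3) by (auto simp: windows_within_def Fwindow_def intro!: exI[of _ 1])
  fix p q assume pq: "1 \<le> p" "1 \<le> q" "(p, q) \<notin> windows_within {..int m} i"
  then have "int m - i < int p" by (auto simp: windows_within_def Fwindow_def)
  define a where "a = nat (- i)"
  define b where "b = p - (m + a + 1)"
  have "i = - int a" "p = m + a + 1 + b"
    using assms(2) \<open>int m - i < int p\<close> unfolding a_def b_def by auto
  moreover have "\<not> Froot (\<lambda>n. X n \<omega>) (m + a + 1 + b) (- int a) ((q - 1) + 1) < t"
    using assms(1) unfolding past_bad_def by blast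
  ultimately show "t \<le> Froot (\<lambda>n. X n \<omega>) p i q" using pq(2) by simp
qed (use assms(1) in simp)

lemma Y_eq_Y_local_future:
  assumes "\<omega> \<in> space M - future_bad k m" "int k \<le> i" "2 * m \<le> k"
  shows "Y i \<omega> = Y_local {int m + 1..} i \<omega>"
proof (rule Y_eq_Y_local)
  show "windows_within {int m + 1..} i \<noteq> {}"
    using assms(2,3) by (auto simp: windows_within_def Fwindow_def intro!: exI[of _ 1])
  fix p q assume pq: "1 \<le> p" "1 \<le> q" "(p, q) \<notin> windows_within {int m + 1..} i"
  then have "i - int m + 1 < int q" by (auto simp: windows_within_def Fwindow_def)
  define a where "a = nat (i - int k)"
  define b where "b = q - (k + a + 2 - m)"
  have "i = int k + int a" "q = k + a + 2 + b - m"
    using assms(2,3) \<open>i - int m + 1 < int q\<close> unfolding a_def b_def by auto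
  moreover have "\<not> Froot (\<lambda>n. X n \<omega>) ((p - 1) + 1) (int k + int a) (k + a + 2 + b - m) < t"
    using assms(1) unfolding future_bad_def by blast
  ultimately show "t \<le> Froot (\<lambda>n. X n \<omega>) p i q" using pq(1) by simp
qed (use assms(1) in simp)

lemma abs_prob_Int_Y_events_le:
  assumes "1 \<le> m" "2 * m \<le> k" "A \<in> gen_sets M Y {..0}" "B \<in> gen_sets M Y {int k..}"
  shows "\<bar>prob (A \<inter> B) - prob A * prob B\<bar> \<le> 6 * exp (- rate * real m) / (1 - exp (- rate)) ^ 3"
proof -
  define N where "N = past_bad m \<union> future_bad k m"
  obtain A' where A': "A' \<in> gen_sets M X {..int m}" "A \<inter> (space M - N) = A' \<inter> (space M - N)"
    using gen_sets_agree_outside[OF assms(3), of "Y_local {..int m}" X "{..int m}" N]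
      Y_local_measurable Y_eq_Y_local_past[OF _ _ assms(1)] unfolding N_def by blast
  obtain B' where B': "B' \<in> gen_sets M X {int m + 1..}" "B \<inter> (space M - N) = B' \<inter> (space M - N)"
    using gen_sets_agree_outside[OF assms(4), of "Y_local {int m + 1..}" X "{int m + 1..}" N]
      Y_local_measurable Y_eq_Y_local_future[OF _ _ assms(2)] unfolding N_def by blast
  have events: "gen_sets M Y I \<subseteq> events" "gen_sets M X I \<subseteq> events" for I
    by (auto intro!: gen_sets_subset_sets)
  have "\<bar>prob (A \<inter> B) - prob A * prob B\<bar> \<le> 3 * prob N"
  proof (rule abs_prob_Int_diff_le_of_agree_outside[OF _ _ _ _ _ A'(2) B'(2)])
    show "prob (A' \<inter> B') = prob A' * prob B'"
      using A'(1) B'(1) by (intro prob_Int_gen_sets_disjoint[OF X_indep]) auto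
  qed (use assms(3,4) A'(1) B'(1) events past_bad_event future_bad_event in \<open>auto simp: N_def\<close>)
  also have "prob N \<le> prob (past_bad m) + prob (future_bad k m)"
    unfolding N_def using past_bad_event future_bad_event by (rule measure_Un_le)
  also have "\<dots> \<le> 2 * (exp (- rate * real m) / (1 - exp (- rate)) ^ 3)"
    using add_mono[OF prob_past_bad[of m] prob_future_bad[OF assms(2)]] by simp
  finally show ?thesis by simp
qed

lemma mixing_coeff_Y_le:
  assumes "2 \<le> k"
  shows "mixing_coeff M Y (int k) \<le> 6 * exp (- rate * real (k div 2)) / (1 - exp (- rate)) ^ 3"
  using assms by (intro mixing_coeff_le abs_prob_Int_Y_events_le) auto

lemma mixing_coeff_Y_bigo: "(\<lambda>k. mixing_coeff M Y (int k)) \<in> O(\<lambda>k. exp (- (rate / 2) * real k))"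
proof (rule le_imp_bigo_real)
  define C where "C = 6 * exp (rate / 2) / (1 - exp (- rate)) ^ 3"
  have "0 < 1 - exp (- rate)" using rate_pos by simp
  then show "0 \<le> C" unfolding C_def by simp
  show "eventually (\<lambda>k. mixing_coeff M Y (int k) \<le> C * exp (- (rate / 2) * real k)) sequentially"
    using eventually_ge_at_top[of 2]
  proof eventually_elim
    case (elim k)
    have "rate * real k \<le> rate * (2 * real (k div 2) + 1)"
      using rate_pos by (intro mult_left_mono) linarith+
    then have "exp (- rate * real (k div 2)) \<le> exp (rate / 2) * exp (- (rate / 2) * real k)"
      by (simp add: exp_add[symmetric] field_simps)
    then have "6 * exp (- rate * real (k div 2)) / (1 - exp (- rate)) ^ 3 \<le> C * exp (- (rate / 2) * real k)"
      using \<open>0 < 1 - exp (- rate)\<close> unfolding C_def by (simp add: divide_right_mono)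
    then show ?case using mixing_coeff_Y_le[OF elim] by linarith
  qed
qed (simp add: mixing_coeff_nonneg)

end

theorem mainTheorem12:
  fixes M :: "'a measure" and X :: "int \<Rightarrow> 'a \<Rightarrow> real" and \<gamma> t :: real
  assumes "prob_space M"
    and "\<And>i. X i \<in> borel_measurable M"
    and "prob_space.indep_vars M (\<lambda>_. borel) X UNIV"
    and "\<And>i. distr M borel (X i) = distr M borel (X 0)"
    and "\<And>i \<omega>. \<omega> \<in> space M \<Longrightarrow> X i \<omega> \<ge> 0"
    and "integrable M (X 0)" and "integral\<^sup>L M (X 0) = 1"
    and "\<gamma> \<ge> 2" and "integrable M (\<lambda>\<omega>. X 0 \<omega> powr \<gamma>)"
    and "t < 1"
  shows "(let Y = (\<lambda>i \<omega>. min (Tfun (\<lambda>n. X n \<omega>) i) t) in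
           distr M (Pi\<^sub>M UNIV (\<lambda>_. borel)) (\<lambda>\<omega> i. Y (i + 1) \<omega>)
             = distr M (Pi\<^sub>M UNIV (\<lambda>_. borel)) (\<lambda>\<omega> i. Y i \<omega>)
         \<and> (\<lambda>k::nat. mixing_coeff M Y (int k)) \<longlonglongrightarrow> 0
         \<and> (\<lambda>k::nat. mixing_coeff M Y (int k)) \<in> o(\<lambda>k. real k powr (2 - \<gamma>)))"
proof -
  interpret prob_space M by (fact assms(1))
  have "integrable M (\<lambda>\<omega>. (X 0 \<omega>)\<^sup>2)"
    using assms(2,5,8,9) by (intro integrable_power2_of_powr)
  then interpret Tmin_process M X t
    using assms by unfold_locales auto
  have Y: "(\<lambda>i \<omega>. min (Tfun (\<lambda>n. X n \<omega>) i) t) = Y" by (intro ext) (simp add: Y_def)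
  have "(\<lambda>k. exp (- (rate / 2) * real k)) \<in> o(\<lambda>k. real k powr (2 - \<gamma>))"
    using rate_pos by (intro exp_linear_smallo_powr) simp
  moreover have "(\<lambda>k. exp (- (rate / 2) * real k)) \<in> o(\<lambda>_. 1)"
    using rate_pos by (intro exp_linear_smallo_one) simp
  ultimately have "(\<lambda>k. mixing_coeff M Y (int k)) \<in> o(\<lambda>k. real k powr (2 - \<gamma>))"
    "(\<lambda>k. mixing_coeff M Y (int k)) \<in> o(\<lambda>_. 1)"
    by (auto intro: landau_o.big_small_trans[OF mixing_coeff_Y_bigo])
  then show ?thesis
    unfolding Let_def Y using Y_stationary smalloD_tendsto[of _ sequentially "\<lambda>_. 1"] by simp
qed

end
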